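(* Suppose $P(z)$ is invertible at some $z \in \mathbb{C}$ and consider $X, Y, W \in \mathbb{C}^{nd}$ block partitioned as $X=[X_0;\ldots;X_{d-1}]$ etc. with blocks in $\mathbb{C}^n$. Then: (1) The block components of $X = (z\mathcal{B} - \mathcal{A})^{-1} Y$ are given by $X_0 = P(z)^{-1}\left(- Y_{d-1} - A_d Y_{d-1} + \sum_{i=1}^d A_i \sum_{j=0}^{i-1} z^{i-1-j} Y_j\right)$, and $X_i = z X_{i-1} - Y_{i-1}$ for $i=1, 2, \ldots, d-1$. (2) The block components of $\tilde{X} = (z\mathcal{B} - \mathcal{A})^{-*} W$ are given by $\tilde{X}_{d-1} = -P(z)^{-*} \sum_{j=0}^{d-1} \bar{z}^j W_j$, $\tilde{X}_{d-2} = -W_{d-1} - \bar z A_d^* \tilde{X}_{d-1} - A_{d-1}^*\tilde{X}_{d-1}$, and $\tilde{X}_{i} = -W_{i+1} + \bar z \tilde{X}_{i+1} - A_{i+1}^* \tilde{X}_{d-1}$ for $i=0, 1, \ldots, d-3$.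
   Context: Let $A_0, \ldots, A_d \in \mathbb{C}^{n\times n}$ with $A_d\neq 0$, and $P(z) = \sum_{j=0}^d z^j A_j$. The first companion linearization is the pencil $\mathcal{A} - z\mathcal{B}\in\mathbb{C}^{nd\times nd}$, written in $d\times d$ blocks of size $n\times n$: $\mathcal{A}$ has identity blocks $I$ on the first block superdiagonal in its first $d-1$ block rows, zeros elsewhere in those rows, and last block row $[A_0, A_1, \ldots, A_{d-1}]$; $\mathcal{B} = \mathrm{diag}(I, \ldots, I, -A_d)$. $M^{-*}$ denotes $(M^* )^{-1}$ and $^*$ is conjugate transpose. *)

theory Defs
  imports "Jordan_Normal_Form.Gauss_Jordan_Elimination"
begin

definition ctrans :: "complex mat \<Rightarrow> complex mat" where
  "ctrans M = mat (dim_col M) (dim_row M) (\<lambda>(i,j). cnj (M $$ (j,i)))"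

definition minv :: "complex mat \<Rightarrow> complex mat" where
  "minv M = the (mat_inverse M)"

definition matpoly :: "nat \<Rightarrow> nat \<Rightarrow> (nat \<Rightarrow> complex mat) \<Rightarrow> complex \<Rightarrow> complex mat" where
  "matpoly n d A z = mat n n (\<lambda>(r,c). \<Sum>j=0..d. z ^ j * (A j $$ (r,c)))"

text \<open>First companion linearization: the matrix cal A (nd x nd, d x d blocks of size n).\<close>
definition compA :: "nat \<Rightarrow> nat \<Rightarrow> (nat \<Rightarrow> complex mat) \<Rightarrow> complex mat" where
  "compA n d A = mat (n*d) (n*d) (\<lambda>(r,c).
     if r div n < d - 1
     then (if c div n = r div n + 1 \<and> r mod n = c mod n then 1 else 0)
     else A (c div n) $$ (r mod n, c mod n))"

definition compB :: "nat \<Rightarrow> nat \<Rightarrow> (nat \<Rightarrow> complex mat) \<Rightarrow> complex mat" where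
  "compB n d A = mat (n*d) (n*d) (\<lambda>(r,c).
     if r div n = c div n
     then (if r div n < d - 1 then (if r mod n = c mod n then 1 else 0)
           else - (A d $$ (r mod n, c mod n)))
     else 0)"

definition blk :: "nat \<Rightarrow> complex vec \<Rightarrow> nat \<Rightarrow> complex vec" where
  "blk n v i = vec n (\<lambda>k. v $ (i*n + k))"

end

theory Submission
  imports Defs "Jordan_Normal_Form.Determinant"
begin

(* Write L = z B - A for the pencil. Its first d - 1 block rows say X_(i+1) = z X_i - Y_i, so
   X_i = z^i X_0 - sum_(j<i) z^(i-1-j) Y_j; substituting this into the last block row leaves exactly
   P(z) X_0 = -Y_(d-1) - A_d Y_(d-1) + sum_(i=1..d) A_i sum_(j<i) z^(i-1-j) Y_j. In particular L X = 0
   forces X_0 = 0 and then X = 0, so L is invertible whenever P(z) is. For L^* T = W, every block row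
   has the shape W_j = conj(z) U_(j+1) - U_j - A_j^* T_(d-1) with U_j = T_(j-1), U_0 = 0 and
   U_d = -A_d^* T_(d-1); weighting row j by conj(z)^j makes the sum telescope to -P(z)^* T_(d-1). *)

lemma linear_recurrence_closed_form:
  fixes x y :: "nat \<Rightarrow> 'a :: comm_ring_1"
  assumes rec: "\<And>i. i < N \<Longrightarrow> x (Suc i) = z * x i - y i" and "i \<le> N"
  shows "x i = z ^ i * x 0 - (\<Sum>j<i. z ^ (i - 1 - j) * y j)"
  using assms(2)
proof (induction i)
  case (Suc i)
  have "z * (\<Sum>j<i. z ^ (i - 1 - j) * y j) = (\<Sum>j<i. z ^ (i - j) * y j)"
    unfolding sum_distrib_left by (intro sum.cong refl) (simp add: Suc_diff_Suc flip: power_Suc mult.assoc)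
  then show ?case using rec[of i] Suc by (simp add: algebra_simps)
qed simp

lemma weighted_telescoping_sum:
  fixes u w a :: "nat \<Rightarrow> 'a :: comm_ring_1"
  assumes "\<And>j. j < d \<Longrightarrow> w j = c * u (Suc j) - u j - a j" and "u 0 = 0" and "u d = - a d"
  shows "(\<Sum>j<d. c ^ j * w j) = - (\<Sum>j\<le>d. c ^ j * a j)"
proof -
  have "(\<Sum>j<d. c ^ j * w j) = (\<Sum>j<d. c ^ Suc j * u (Suc j) - c ^ j * u j) - (\<Sum>j<d. c ^ j * a j)"
    unfolding sum_subtractf[symmetric] by (intro sum.cong refl) (simp add: assms(1) algebra_simps)
  also have "(\<Sum>j<d. c ^ Suc j * u (Suc j) - c ^ j * u j) = c ^ d * u d - u 0"
    by (subst sum_lessThan_telescope[where f = "\<lambda>j. c ^ j * u j"]) simp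
  finally show ?thesis using assms(2,3) by (simp add: lessThan_Suc_atMost[symmetric])
qed

lemma companion_first_block_elimination:
  fixes x y a :: "nat \<Rightarrow> nat \<Rightarrow> 'a :: comm_ring_1"
  assumes d: "d = Suc e"
    and rec: "\<And>i m. i < e \<Longrightarrow> m < n \<Longrightarrow> x (Suc i) m = z * x i m - y i m"
    and last: "- z * (\<Sum>m<n. a d m * x e m) - (\<Sum>j<d. \<Sum>m<n. a j m * x j m) = y e k"
  shows "(\<Sum>m<n. (\<Sum>j\<le>d. z ^ j * a j m) * x 0 m) =
    - y e k - (\<Sum>m<n. a d m * y e m) + (\<Sum>i\<in>{1..d}. \<Sum>m<n. a i m * (\<Sum>j<i. z ^ (i - 1 - j) * y j m))"
proof -
  define s where "s i m = (\<Sum>j<i. z ^ (i - 1 - j) * y j m)" for i m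
  \<comment> \<open>Running the recurrence one step past the last block turns the last block row into a
    statement about the closed form alone.\<close>
  define x' where "x' i m = (if i = d then z * x e m - y e m else x i m)" for i m
  have closed: "x' i m = z ^ i * x 0 m - s i m" if "i \<le> d" "m < n" for i m
  proof -
    have "x' (Suc i) m = z * x' i m - y i m" if "i < d" for i
      using rec[of i m] that \<open>m < n\<close> d by (auto simp: x'_def)
    then show ?thesis
      using linear_recurrence_closed_form[of d "\<lambda>i. x' i m"] \<open>i \<le> d\<close> d by (simp add: s_def x'_def)
  qed
  have "(\<Sum>j\<le>d. \<Sum>m<n. a j m * x' j m) =
      (\<Sum>j<d. \<Sum>m<n. a j m * x j m) + z * (\<Sum>m<n. a d m * x e m) - (\<Sum>m<n. a d m * y e m)"
    by (simp add: x'_def d sum_distrib_left sum_subtractf algebra_simps lessThan_Suc_atMost[symmetric])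
  also have "\<dots> = - y e k - (\<Sum>m<n. a d m * y e m)"
    unfolding last[symmetric] by (simp add: algebra_simps)
  finally have "(\<Sum>j\<le>d. \<Sum>m<n. a j m * x' j m) = - y e k - (\<Sum>m<n. a d m * y e m)" .
  moreover have "(\<Sum>j\<le>d. \<Sum>m<n. a j m * x' j m) =
      (\<Sum>m<n. (\<Sum>j\<le>d. z ^ j * a j m) * x 0 m) - (\<Sum>i\<in>{1..d}. \<Sum>m<n. a i m * s i m)"
  proof -
    have "(\<Sum>j\<le>d. \<Sum>m<n. a j m * x' j m) = (\<Sum>j\<le>d. \<Sum>m<n. z ^ j * a j m * x 0 m - a j m * s j m)"
      by (intro sum.cong refl) (simp add: closed algebra_simps)
    also have "\<dots> = (\<Sum>m<n. (\<Sum>j\<le>d. z ^ j * a j m) * x 0 m) - (\<Sum>j\<le>d. \<Sum>m<n. a j m * s j m)"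
      by (simp add: sum_subtractf sum_distrib_right sum.swap[of _ "{..d}"])
    also have "(\<Sum>j\<le>d. \<Sum>m<n. a j m * s j m) = (\<Sum>i\<in>{1..d}. \<Sum>m<n. a i m * s i m)"
      by (simp add: s_def atMost_atLeast0 sum.atLeast_Suc_atMost)
    finally show ?thesis .
  qed
  ultimately show ?thesis by (simp add: s_def algebra_simps)
qed

lemma dim_ctrans [simp]: "dim_row (ctrans M) = dim_col M" "dim_col (ctrans M) = dim_row M"
  unfolding ctrans_def by simp_all

lemma ctrans_carrier_mat [simp]: "M \<in> carrier_mat a b \<Longrightarrow> ctrans M \<in> carrier_mat b a"
  unfolding ctrans_def by simp

lemma index_ctrans [simp]:
  "i < dim_col M \<Longrightarrow> j < dim_row M \<Longrightarrow> ctrans M $$ (i, j) = cnj (M $$ (j, i))"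
  unfolding ctrans_def by simp

lemma ctrans_mult:
  assumes "A \<in> carrier_mat a b" "B \<in> carrier_mat b c"
  shows "ctrans (A * B) = ctrans B * ctrans A"
  using assms by (intro eq_matI) (auto simp: scalar_prod_def intro!: sum.cong)

lemma ctrans_one [simp]: "ctrans (1\<^sub>m N) = (1\<^sub>m N :: complex mat)"
  by (intro eq_matI) auto

lemma mat_unitI:
  assumes "M \<in> carrier_mat N N" "B \<in> carrier_mat N N" "M * B = 1\<^sub>m N" "B * M = 1\<^sub>m N"
  shows "M \<in> Units (ring_mat TYPE('a :: semiring_1) N b)"
  using assms unfolding Units_def ring_mat_def by auto

lemma invertible_mat_unit:
  assumes M: "M \<in> carrier_mat N N" and "invertible_mat M"
  shows "M \<in> Units (ring_mat TYPE('a :: semiring_1) N b)"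
proof -
  obtain B where MB: "M * B = 1\<^sub>m N" and BM: "B * M = 1\<^sub>m (dim_row B)"
    using assms unfolding invertible_mat_def inverts_mat_def by auto
  have "B \<in> carrier_mat N N"
    using arg_cong[OF MB, of dim_col] arg_cong[OF BM, of dim_col] M by auto
  with M MB BM show ?thesis by (auto intro: mat_unitI)
qed

lemma minv_inverse:
  assumes M: "M \<in> carrier_mat N N" and "M \<in> Units (ring_mat TYPE(complex) N b)"
  shows "minv M \<in> carrier_mat N N" "M * minv M = 1\<^sub>m N" "minv M * M = 1\<^sub>m N"
proof -
  obtain B where "mat_inverse M = Some B"
    using mat_inverse(1)[OF M, where b = b] assms(2) by (cases "mat_inverse M") auto
  then show "minv M \<in> carrier_mat N N" "M * minv M = 1\<^sub>m N" "minv M * M = 1\<^sub>m N"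
    using mat_inverse(2)[OF M] unfolding minv_def by auto
qed

lemma ctrans_unit:
  assumes M: "M \<in> carrier_mat N N" and "M \<in> Units (ring_mat TYPE(complex) N b)"
  shows "ctrans M \<in> Units (ring_mat TYPE(complex) N b)"
proof (rule mat_unitI)
  note inv = minv_inverse[OF assms]
  show "ctrans M * ctrans (minv M) = 1\<^sub>m N"
    using ctrans_mult[OF inv(1) M] inv(3) by simp
  show "ctrans (minv M) * ctrans M = 1\<^sub>m N"
    using ctrans_mult[OF M inv(1)] inv(2) by simp
qed (use M minv_inverse[OF assms] in auto)

lemma unit_if_trivial_kernel:
  assumes M: "M \<in> carrier_mat N N"
    and kernel: "\<And>v. v \<in> carrier_vec N \<Longrightarrow> M *\<^sub>v v = 0\<^sub>v N \<Longrightarrow> v = 0\<^sub>v N"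
  shows "M \<in> Units (ring_mat TYPE('a :: field) N b)"
  using det_0_iff_vec_prod_zero_field[OF M] kernel by (auto intro: det_non_zero_imp_unit[OF M])

lemma minv_mult_vec_eqI:
  assumes M: "M \<in> carrier_mat N N" and U: "M \<in> Units (ring_mat TYPE(complex) N b)"
    and x: "x \<in> carrier_vec N" and "M *\<^sub>v x = y"
  shows "x = minv M *\<^sub>v y"
proof -
  have "minv M *\<^sub>v y = (minv M * M) *\<^sub>v x"
    using assoc_mult_mat_vec[OF minv_inverse(1)[OF M U] M x] assms(4) by simp
  then show ?thesis using minv_inverse(3)[OF M U] x by simp
qed

lemma mult_mat_vec_minv:
  assumes M: "M \<in> carrier_mat N N" and U: "M \<in> Units (ring_mat TYPE(complex) N b)"
    and "y \<in> carrier_vec N"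
  shows "M *\<^sub>v (minv M *\<^sub>v y) = y"
  using assms assoc_mult_mat_vec[OF M minv_inverse(1)[OF M U]] minv_inverse(2)[OF M U] by simp

lemma mult_mat_vec_uminus:
  fixes M :: "'a :: comm_ring mat"
  assumes "M \<in> carrier_mat r c" "v \<in> carrier_vec c"
  shows "M *\<^sub>v (- v) = - (M *\<^sub>v v)"
  using assms by (intro eq_vecI) (auto simp: carrier_matD carrier_vecD)

lemma index_mult_mat_vec_sum:
  assumes "M \<in> carrier_mat r c" "v \<in> carrier_vec c" "k < r"
  shows "(M *\<^sub>v v) $ k = (\<Sum>m<c. M $$ (k, m) * v $ m)"
  using assms by (simp add: scalar_prod_def lessThan_atLeast0)

lemma index_ctrans_mult_vec:
  assumes "M \<in> carrier_mat r c" "u \<in> carrier_vec r" "k < c"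
  shows "(ctrans M *\<^sub>v u) $ k = (\<Sum>m<r. cnj (M $$ (m, k)) * u $ m)"
  unfolding index_mult_mat_vec_sum[OF ctrans_carrier_mat[OF assms(1)] assms(2,3)]
  using assms by (intro sum.cong refl) auto

lemma matpoly_carrier: "matpoly n d A z \<in> carrier_mat n n"
  unfolding matpoly_def by simp

lemma index_matpoly:
  "k < n \<Longrightarrow> m < n \<Longrightarrow> matpoly n d A z $$ (k, m) = (\<Sum>j\<le>d. z ^ j * A j $$ (k, m))"
  unfolding matpoly_def by (simp add: atMost_atLeast0)

lemma blk_carrier [simp]: "blk n v i \<in> carrier_vec n"
  and dim_blk [simp]: "dim_vec (blk n v i) = n"
  and index_blk [simp]: "k < n \<Longrightarrow> blk n v i $ k = v $ (i * n + k)"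
  unfolding blk_def by simp_all

lemma block_index_less:
  fixes i k n d :: nat
  assumes "i < d" "k < n"
  shows "i * n + k < n * d"
proof -
  have "i * n + k < Suc i * n" using assms by simp
  also have "\<dots> \<le> d * n" using assms by (intro mult_le_mono1) simp
  finally show ?thesis by (simp add: mult.commute)
qed

lemma sum_blocks: "(\<Sum>c<n * d. f c) = (\<Sum>j<d. \<Sum>m<n. f (j * n + m :: nat))"
proof (induction d)
  case (Suc d)
  have "(\<Sum>c<n * Suc d. f c) = (\<Sum>c \<in> {..<n * d} \<union> {n * d..<n * d + n}. f c)"
    by (rule sum.cong) auto
  also have "\<dots> = (\<Sum>c<n * d. f c) + (\<Sum>c\<in>{n * d..<n * d + n}. f c)"
    by (rule sum.union_disjoint) auto
  also have "(\<Sum>c\<in>{n * d..<n * d + n}. f c) = (\<Sum>m<n. f (d * n + m))"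
    by (simp add: sum.shift_bounds_nat_ivl[symmetric] lessThan_atLeast0 mult.commute add.commute)
  finally show ?case using Suc by simp
qed simp

lemma mult_mat_vec_blocks:
  assumes "M \<in> carrier_mat (n * d) (n * d)" "v \<in> carrier_vec (n * d)" "i < d" "k < n"
  shows "(M *\<^sub>v v) $ (i * n + k) = (\<Sum>j<d. \<Sum>m<n. M $$ (i * n + k, j * n + m) * v $ (j * n + m))"
  using assms block_index_less[OF assms(3,4)]
  by (subst index_mult_mat_vec_sum[OF assms(1,2)]) (simp_all add: sum_blocks)

lemma sum_blocks_delta:
  fixes i k d n :: nat
  shows "(\<Sum>j<d. \<Sum>m<n. if j = i \<and> m = k then f j m else 0) = (if i < d \<and> k < n then f i k else 0)"
proof -
  have "(\<Sum>m<n. if j = i \<and> m = k then f j m else 0) = (if j = i \<and> k < n then f i k else 0)" for j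
    by (cases "j = i") simp_all
  then show ?thesis by (cases "k < n") simp_all
qed

lemma sum_blocks_delta_Suc:
  fixes j k e n :: nat
  shows "(\<Sum>i<e. \<Sum>m<n. if Suc i = j \<and> m = k then f i m else 0) =
    (if 0 < j \<and> j \<le> e \<and> k < n then f (j - 1) k else 0)"
proof (cases j)
  case (Suc j')
  then have "(\<Sum>i<e. \<Sum>m<n. if Suc i = j \<and> m = k then f i m else 0) =
      (\<Sum>i<e. \<Sum>m<n. if i = j' \<and> m = k then f i m else 0)"
    by simp
  then show ?thesis using Suc by (simp add: sum_blocks_delta Suc_le_eq)
qed simp

abbreviation pencil :: "nat \<Rightarrow> nat \<Rightarrow> (nat \<Rightarrow> complex mat) \<Rightarrow> complex \<Rightarrow> complex mat" where
  "pencil n d A z \<equiv> z \<cdot>\<^sub>m compB n d A - compA n d A"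

lemma pencil_carrier: "pencil n d A z \<in> carrier_mat (n * d) (n * d)"
  by (intro minus_carrier_mat smult_carrier_mat) (auto simp: compA_def compB_def)

lemma index_pencil_blocks:
  assumes "i < d" "j < d" "k < n" "m < n"
  shows "pencil n d A z $$ (i * n + k, j * n + m) =
    (if Suc i < d then (if j = i \<and> m = k then z else 0) - (if j = Suc i \<and> m = k then 1 else 0)
     else (if j = i then - z * A d $$ (k, m) else 0) - A j $$ (k, m))"
  using assms block_index_less[of i d k n] block_index_less[of j d m n]
  by (auto simp: compA_def compB_def)

lemma pencil_mult_vec_upper_block:
  assumes "v \<in> carrier_vec (n * d)" "Suc i < d" "k < n"
  shows "(pencil n d A z *\<^sub>v v) $ (i * n + k) = z * v $ (i * n + k) - v $ (Suc i * n + k)"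
proof -
  have "(pencil n d A z *\<^sub>v v) $ (i * n + k) = (\<Sum>j<d. \<Sum>m<n.
      (if j = i \<and> m = k then z * v $ (j * n + m) else 0) - (if j = Suc i \<and> m = k then v $ (j * n + m) else 0))"
    using assms by (auto simp: mult_mat_vec_blocks[OF pencil_carrier] index_pencil_blocks intro!: sum.cong)
  then show ?thesis using assms by (simp add: sum_subtractf sum_blocks_delta)
qed

lemma pencil_mult_vec_last_block:
  assumes "v \<in> carrier_vec (n * d)" "d = Suc e" "k < n"
  shows "(pencil n d A z *\<^sub>v v) $ (e * n + k) =
    - z * (\<Sum>m<n. A d $$ (k, m) * v $ (e * n + m)) - (\<Sum>j<d. \<Sum>m<n. A j $$ (k, m) * v $ (j * n + m))"
proof -
  have "(pencil n d A z *\<^sub>v v) $ (e * n + k) = (\<Sum>j<d. \<Sum>m<n.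
      (if j = e then - z * (A d $$ (k, m) * v $ (e * n + m)) else 0) - A j $$ (k, m) * v $ (j * n + m))"
    using assms by (auto simp: mult_mat_vec_blocks[OF pencil_carrier] index_pencil_blocks left_diff_distrib
        intro!: sum.cong)
  also have "\<dots> = - z * (\<Sum>m<n. A d $$ (k, m) * v $ (e * n + m))
      - (\<Sum>j<d. \<Sum>m<n. A j $$ (k, m) * v $ (j * n + m))"
    using assms by (simp add: sum_subtractf sum_distrib_left sum.swap[of _ "{..<d}"])
  finally show ?thesis .
qed

lemma adjoint_pencil_mult_vec_block:
  assumes "v \<in> carrier_vec (n * d)" "d = Suc e" "j < d" "k < n"
  shows "(ctrans (pencil n d A z) *\<^sub>v v) $ (j * n + k) =
    (if j < e then cnj z * v $ (j * n + k) else 0) - (if 0 < j then v $ ((j - 1) * n + k) else 0)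
    - (if j = e then cnj z * (\<Sum>m<n. cnj (A d $$ (m, k)) * v $ (e * n + m)) else 0)
    - (\<Sum>m<n. cnj (A j $$ (m, k)) * v $ (e * n + m))"
proof -
  let ?L = "pencil n d A z"
  have "(ctrans ?L *\<^sub>v v) $ (j * n + k) =
      (\<Sum>i<d. \<Sum>m<n. cnj (?L $$ (i * n + m, j * n + k)) * v $ (i * n + m))"
    unfolding mult_mat_vec_blocks[OF ctrans_carrier_mat[OF pencil_carrier] assms(1,3,4)]
    using assms(3,4) block_index_less carrier_matD[OF pencil_carrier] by (intro sum.cong refl) simp
  also have "\<dots> = (\<Sum>i<e. \<Sum>m<n.
        (if i = j \<and> m = k then cnj z * v $ (i * n + m) else 0)
        - (if Suc i = j \<and> m = k then v $ (i * n + m) else 0))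
      + (\<Sum>m<n. (if j = e then - cnj z * (cnj (A d $$ (m, k)) * v $ (e * n + m)) else 0)
          - cnj (A j $$ (m, k)) * v $ (e * n + m))"
    using assms unfolding assms(2) sum.lessThan_Suc
    by (intro arg_cong2[where f = "(+)"] sum.cong refl) (auto simp: index_pencil_blocks left_diff_distrib)
  also have "\<dots> = (if j < e then cnj z * v $ (j * n + k) else 0) - (if 0 < j then v $ ((j - 1) * n + k) else 0)
      - (if j = e then cnj z * (\<Sum>m<n. cnj (A d $$ (m, k)) * v $ (e * n + m)) else 0)
      - (\<Sum>m<n. cnj (A j $$ (m, k)) * v $ (e * n + m))"
    using assms by (cases "j = e")
      (auto simp: sum_subtractf sum_negf sum_blocks_delta sum_blocks_delta_Suc sum_distrib_left)
  finally show ?thesis .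
qed

lemma pencil_solution_first_block_index:
  assumes d: "d = Suc e" and X: "X \<in> carrier_vec (n * d)" and LX: "pencil n d A z *\<^sub>v X = Y"
    and k: "k < n"
  shows "(matpoly n d A z *\<^sub>v blk n X 0) $ k = - Y $ (e * n + k) - (\<Sum>m<n. A d $$ (k, m) * Y $ (e * n + m))
    + (\<Sum>i\<in>{1..d}. \<Sum>m<n. A i $$ (k, m) * (\<Sum>j<i. z ^ (i - 1 - j) * Y $ (j * n + m)))"
proof -
  have "(matpoly n d A z *\<^sub>v blk n X 0) $ k = (\<Sum>m<n. (\<Sum>j\<le>d. z ^ j * A j $$ (k, m)) * X $ (0 * n + m))"
    unfolding index_mult_mat_vec_sum[OF matpoly_carrier blk_carrier k] by (simp add: k index_matpoly)
  also have "\<dots> = - Y $ (e * n + k) - (\<Sum>m<n. A d $$ (k, m) * Y $ (e * n + m))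
    + (\<Sum>i\<in>{1..d}. \<Sum>m<n. A i $$ (k, m) * (\<Sum>j<i. z ^ (i - 1 - j) * Y $ (j * n + m)))"
  proof (rule companion_first_block_elimination[OF d, where x = "\<lambda>i m. X $ (i * n + m)"
        and y = "\<lambda>i m. Y $ (i * n + m)" and a = "\<lambda>j m. A j $$ (k, m)"])
    show "X $ (Suc i * n + m) = z * X $ (i * n + m) - Y $ (i * n + m)" if "i < e" "m < n" for i m
      using pencil_mult_vec_upper_block[OF X, where i = i and k = m and A = A and z = z] that d LX by simp
    show "- z * (\<Sum>m<n. A d $$ (k, m) * X $ (e * n + m)) - (\<Sum>j<d. \<Sum>m<n. A j $$ (k, m) * X $ (j * n + m))
        = Y $ (e * n + k)"
      using pencil_mult_vec_last_block[OF X d k, where A = A and z = z] LX by simp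
  qed
  finally show ?thesis .
qed

lemma pencil_unit:
  assumes "0 < d" and P: "matpoly n d A z \<in> Units (ring_mat TYPE(complex) n b)"
  shows "pencil n d A z \<in> Units (ring_mat TYPE(complex) (n * d) b)"
proof (rule unit_if_trivial_kernel[OF pencil_carrier])
  fix v assume v: "v \<in> carrier_vec (n * d)" and Lv: "pencil n d A z *\<^sub>v v = 0\<^sub>v (n * d)"
  obtain e where d: "d = Suc e" using assms(1) by (cases d) auto
  have zero: "0\<^sub>v (n * d) $ (j * n + m) = (0 :: complex)" if "j < d" "m < n" for j m
    using block_index_less[OF that] by simp
  have "matpoly n d A z *\<^sub>v blk n v 0 = 0\<^sub>v n"
  proof (rule eq_vecI)
    fix k assume "k < dim_vec (0\<^sub>v n :: complex vec)"
    then have k: "k < n" by simp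
    have "(\<Sum>i\<in>{1..d}. \<Sum>m<n. A i $$ (k, m) * (\<Sum>j<i. z ^ (i - 1 - j) * 0\<^sub>v (n * d) $ (j * n + m))) = 0"
      using zero by (intro sum.neutral ballI) auto
    then show "(matpoly n d A z *\<^sub>v blk n v 0) $ k = 0\<^sub>v n $ k"
      using pencil_solution_first_block_index[OF d v Lv k] zero d k by simp
  qed (simp add: carrier_matD[OF matpoly_carrier])
  then have "blk n v 0 = minv (matpoly n d A z) *\<^sub>v 0\<^sub>v n"
    by (rule minv_mult_vec_eqI[OF matpoly_carrier P blk_carrier])
  then have block0: "blk n v 0 = 0\<^sub>v n"
    using minv_inverse(1)[OF matpoly_carrier P] by auto
  have blocks: "v $ (i * n + m) = 0" if "i < d" "m < n" for i m
    using that
  proof (induction i)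
    case 0
    then show ?case using arg_cong[OF block0, of "\<lambda>u. u $ m"] by simp
  next
    case (Suc i)
    then show ?case
      using pencil_mult_vec_upper_block[OF v, where i = i and k = m and A = A and z = z] Lv zero[of i m]
      by simp
  qed
  show "v = 0\<^sub>v (n * d)"
  proof (rule eq_vecI)
    fix r assume "r < dim_vec (0\<^sub>v (n * d) :: complex vec)"
    then have r: "r < n * d" by simp
    then have "r div n < d" "r mod n < n"
      by (simp_all add: less_mult_imp_div_less mult.commute) (cases n; simp)
    then show "v $ r = 0\<^sub>v (n * d) $ r" using blocks r by (metis div_mult_mod_eq index_zero_vec(1))
  qed (use v in simp)
qed

lemma pencil_solution_first_block:
  assumes "0 < d" and A_dim: "\<And>j. j \<le> d \<Longrightarrow> A j \<in> carrier_mat n n"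
    and X: "X \<in> carrier_vec (n * d)" and LX: "pencil n d A z *\<^sub>v X = Y"
  shows "matpoly n d A z *\<^sub>v blk n X 0 = - blk n Y (d - 1) - A d *\<^sub>v blk n Y (d - 1)
    + finsum_vec TYPE(complex) n
        (\<lambda>i. A i *\<^sub>v finsum_vec TYPE(complex) n (\<lambda>j. z ^ (i - 1 - j) \<cdot>\<^sub>v blk n Y j) {0..<i}) {1..d}"
proof -
  have d: "d = Suc (d - 1)" using assms(1) by simp
  define inner where "inner i = finsum_vec TYPE(complex) n (\<lambda>j. z ^ (i - 1 - j) \<cdot>\<^sub>v blk n Y j) {0..<i}" for i
  have inner_carrier: "inner i \<in> carrier_vec n" for i
    unfolding inner_def by (rule finsum_vec_closed) auto
  have index_inner: "inner i $ m = (\<Sum>j<i. z ^ (i - 1 - j) * Y $ (j * n + m))" if "m < n" for i m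
    unfolding inner_def using that by (subst index_finsum_vec) (auto simp: atLeast0LessThan)
  have A_mult_carrier: "A i *\<^sub>v u \<in> carrier_vec n" if "i \<le> d" for i u
    using A_dim[OF that] by (intro carrier_vecI) simp
  have index_A_mult: "(A i *\<^sub>v u) $ k = (\<Sum>m<n. A i $$ (k, m) * u $ m)"
    if "i \<le> d" "u \<in> carrier_vec n" "k < n" for i u k
    using index_mult_mat_vec_sum[OF A_dim[OF that(1)] that(2,3)] by simp
  have outer_carrier: "finsum_vec TYPE(complex) n (\<lambda>i. A i *\<^sub>v inner i) {1..d} \<in> carrier_vec n"
    by (rule finsum_vec_closed) (auto simp: A_mult_carrier)
  have outer: "finsum_vec TYPE(complex) n (\<lambda>i. A i *\<^sub>v inner i) {1..d} $ k =
      (\<Sum>i\<in>{1..d}. \<Sum>m<n. A i $$ (k, m) * (\<Sum>j<i. z ^ (i - 1 - j) * Y $ (j * n + m)))" if "k < n" for k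
    using that by (subst index_finsum_vec) (auto simp: A_mult_carrier index_A_mult inner_carrier index_inner)
  show ?thesis
    unfolding inner_def[symmetric]
  proof (rule eq_vecI)
    fix k assume "k < dim_vec (- blk n Y (d - 1) - A d *\<^sub>v blk n Y (d - 1)
      + finsum_vec TYPE(complex) n (\<lambda>i. A i *\<^sub>v inner i) {1..d})"
    then have k: "k < n" using outer_carrier by simp
    show "(matpoly n d A z *\<^sub>v blk n X 0) $ k = (- blk n Y (d - 1) - A d *\<^sub>v blk n Y (d - 1)
      + finsum_vec TYPE(complex) n (\<lambda>i. A i *\<^sub>v inner i) {1..d}) $ k"
      using pencil_solution_first_block_index[OF d X LX k] index_A_mult[of d "blk n Y (d - 1)" k] A_dim[of d]
      using outer_carrier outer[OF k] by (simp add: k)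
  qed (use outer_carrier in \<open>simp add: carrier_matD[OF matpoly_carrier]\<close>)
qed

lemma pencil_solution_next_block:
  assumes X: "X \<in> carrier_vec (n * d)" and LX: "pencil n d A z *\<^sub>v X = Y" and "0 < i" "i < d"
  shows "blk n X i = z \<cdot>\<^sub>v blk n X (i - 1) - blk n Y (i - 1)"
proof (rule eq_vecI)
  fix k assume "k < dim_vec (z \<cdot>\<^sub>v blk n X (i - 1) - blk n Y (i - 1))"
  then have k: "k < n" by simp
  have "Suc (i - 1) = i" using assms by simp
  then show "blk n X i $ k = (z \<cdot>\<^sub>v blk n X (i - 1) - blk n Y (i - 1)) $ k"
    using pencil_mult_vec_upper_block[OF X, where i = "i - 1" and k = k and A = A and z = z] assms k
    by (simp add: algebra_simps)
qed simp

lemma adjoint_pencil_solution_last_block: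
  assumes "0 < d" and T: "T \<in> carrier_vec (n * d)" and LT: "ctrans (pencil n d A z) *\<^sub>v T = W"
  shows "ctrans (matpoly n d A z) *\<^sub>v blk n T (d - 1) =
    - finsum_vec TYPE(complex) n (\<lambda>j. cnj z ^ j \<cdot>\<^sub>v blk n W j) {0..<d}"
proof (rule eq_vecI)
  obtain e where d: "d = Suc e" using assms(1) by (cases d) auto
  fix k assume "k < dim_vec (- finsum_vec TYPE(complex) n (\<lambda>j. cnj z ^ j \<cdot>\<^sub>v blk n W j) {0..<d})"
  then have k: "k < n" by (simp add: carrier_vecD[OF finsum_vec_closed])
  define a where "a j = (\<Sum>m<n. cnj (A j $$ (m, k)) * T $ (e * n + m))" for j
  define u where "u j = (if j = 0 then 0 else if j < d then T $ ((j - 1) * n + k) else - a d)" for j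
  have rows: "W $ (j * n + k) = cnj z * u (Suc j) - u j - a j" if "j < d" for j
    using adjoint_pencil_mult_vec_block[OF T d that k, where A = A and z = z] LT that d
    by (auto simp: u_def a_def)
  have "(\<Sum>j<d. cnj z ^ j * W $ (j * n + k)) = - (\<Sum>j\<le>d. cnj z ^ j * a j)"
    by (rule weighted_telescoping_sum[where w = "\<lambda>j. W $ (j * n + k)", OF rows]) (simp_all add: u_def d)
  moreover have "(ctrans (matpoly n d A z) *\<^sub>v blk n T (d - 1)) $ k = (\<Sum>j\<le>d. cnj z ^ j * a j)"
  proof -
    have "d - 1 = e" using d by simp
    then have "(ctrans (matpoly n d A z) *\<^sub>v blk n T (d - 1)) $ k =
        (\<Sum>m<n. (\<Sum>j\<le>d. cnj z ^ j * cnj (A j $$ (m, k))) * T $ (e * n + m))"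
      using k by (simp add: index_ctrans_mult_vec[OF matpoly_carrier blk_carrier k] index_matpoly)
    also have "\<dots> = (\<Sum>j\<le>d. cnj z ^ j * a j)"
      unfolding a_def sum_distrib_left sum_distrib_right by (subst sum.swap) (simp add: mult.assoc)
    finally show ?thesis .
  qed
  moreover have "finsum_vec TYPE(complex) n (\<lambda>j. cnj z ^ j \<cdot>\<^sub>v blk n W j) {0..<d} $ k =
      (\<Sum>j<d. cnj z ^ j * W $ (j * n + k))"
    using k by (subst index_finsum_vec) (auto simp: atLeast0LessThan)
  ultimately show "(ctrans (matpoly n d A z) *\<^sub>v blk n T (d - 1)) $ k =
      (- finsum_vec TYPE(complex) n (\<lambda>j. cnj z ^ j \<cdot>\<^sub>v blk n W j) {0..<d}) $ k"
    using k by (simp add: carrier_vecD[OF finsum_vec_closed])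
qed (simp add: carrier_vecD[OF finsum_vec_closed] carrier_matD[OF matpoly_carrier])

lemma adjoint_pencil_solution_penultimate_block:
  assumes "2 \<le> d" and A_dim: "\<And>j. j \<le> d \<Longrightarrow> A j \<in> carrier_mat n n"
    and T: "T \<in> carrier_vec (n * d)" and LT: "ctrans (pencil n d A z) *\<^sub>v T = W"
  shows "blk n T (d - 2) = - blk n W (d - 1)
    - cnj z \<cdot>\<^sub>v (ctrans (A d) *\<^sub>v blk n T (d - 1)) - ctrans (A (d - 1)) *\<^sub>v blk n T (d - 1)"
proof (rule eq_vecI)
  have d: "d = Suc (d - 1)" using assms(1) by simp
  fix k assume "k < dim_vec (- blk n W (d - 1)
    - cnj z \<cdot>\<^sub>v (ctrans (A d) *\<^sub>v blk n T (d - 1)) - ctrans (A (d - 1)) *\<^sub>v blk n T (d - 1))"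
  then have k: "k < n" using A_dim[of "d - 1"] by simp
  show "blk n T (d - 2) $ k = (- blk n W (d - 1)
    - cnj z \<cdot>\<^sub>v (ctrans (A d) *\<^sub>v blk n T (d - 1)) - ctrans (A (d - 1)) *\<^sub>v blk n T (d - 1)) $ k"
    using adjoint_pencil_mult_vec_block[OF T d _ k, where j = "d - 1" and A = A and z = z] assms(1) LT k
      A_dim[of d] A_dim[of "d - 1"] index_ctrans_mult_vec[OF A_dim[of d] blk_carrier[of n T "d - 1"] k]
      index_ctrans_mult_vec[OF A_dim[of "d - 1"] blk_carrier[of n T "d - 1"] k]
    by (simp add: numeral_2_eq_2 Suc_diff_Suc)
qed (use A_dim[of "d - 1"] in simp)

lemma adjoint_pencil_solution_inner_block:
  assumes "i + 3 \<le> d" and A_dim: "\<And>j. j \<le> d \<Longrightarrow> A j \<in> carrier_mat n n"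
    and T: "T \<in> carrier_vec (n * d)" and LT: "ctrans (pencil n d A z) *\<^sub>v T = W"
  shows "blk n T i = - blk n W (i + 1) + cnj z \<cdot>\<^sub>v blk n T (i + 1)
    - ctrans (A (i + 1)) *\<^sub>v blk n T (d - 1)"
proof (rule eq_vecI)
  have d: "d = Suc (d - 1)" using assms(1) by simp
  fix k assume "k < dim_vec (- blk n W (i + 1) + cnj z \<cdot>\<^sub>v blk n T (i + 1)
    - ctrans (A (i + 1)) *\<^sub>v blk n T (d - 1))"
  then have k: "k < n" using A_dim[of "i + 1"] assms(1) by simp
  have "Suc i < d - 1" using assms(1) by simp
  show "blk n T i $ k = (- blk n W (i + 1) + cnj z \<cdot>\<^sub>v blk n T (i + 1)
    - ctrans (A (i + 1)) *\<^sub>v blk n T (d - 1)) $ k"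
    using adjoint_pencil_mult_vec_block[OF T d _ k, where j = "i + 1" and A = A and z = z] assms(1) LT k
      \<open>Suc i < d - 1\<close> A_dim[of "i + 1"]
      index_ctrans_mult_vec[OF A_dim[of "i + 1"] blk_carrier[of n T "d - 1"] k]
    by simp
qed (use A_dim[of "i + 1"] assms(1) in simp)

theorem theorem2p2:
  fixes n d :: nat and A :: "nat \<Rightarrow> complex mat" and z :: complex
    and Y W :: "complex vec"
  assumes d: "d \<ge> 1"
    and A_dim: "\<And>j. j \<le> d \<Longrightarrow> A j \<in> carrier_mat n n"
    and Ad: "A d \<noteq> 0\<^sub>m n n"
    and Pinv: "invertible_mat (matpoly n d A z)"
    and Y: "Y \<in> carrier_vec (n*d)"
    and W: "W \<in> carrier_vec (n*d)"
  shows
    "(let X = minv (z \<cdot>\<^sub>m compB n d A - compA n d A) *\<^sub>v Y in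
       blk n X 0 = minv (matpoly n d A z) *\<^sub>v
          (- blk n Y (d-1) - A d *\<^sub>v blk n Y (d-1)
           + finsum_vec TYPE(complex) n
               (\<lambda>i. A i *\<^sub>v finsum_vec TYPE(complex) n
                       (\<lambda>j. z ^ (i - 1 - j) \<cdot>\<^sub>v blk n Y j) {0..<i}) {1..d})
     \<and> (\<forall>i\<in>{1..<d}. blk n X i = z \<cdot>\<^sub>v blk n X (i-1) - blk n Y (i-1)))
   \<and> (let Xt = minv (ctrans (z \<cdot>\<^sub>m compB n d A - compA n d A)) *\<^sub>v W in
       blk n Xt (d-1) = - (minv (ctrans (matpoly n d A z)) *\<^sub>v
          finsum_vec TYPE(complex) n (\<lambda>j. (cnj z) ^ j \<cdot>\<^sub>v blk n W j) {0..<d})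
     \<and> (d \<ge> 2 \<longrightarrow> blk n Xt (d-2) = - blk n W (d-1)
          - cnj z \<cdot>\<^sub>v (ctrans (A d) *\<^sub>v blk n Xt (d-1))
          - ctrans (A (d-1)) *\<^sub>v blk n Xt (d-1))
     \<and> (\<forall>i. i + 3 \<le> d \<longrightarrow> blk n Xt i = - blk n W (i+1)
          + cnj z \<cdot>\<^sub>v blk n Xt (i+1) - ctrans (A (i+1)) *\<^sub>v blk n Xt (d-1)))"
proof -
  have d0: "0 < d" using d by simp
  have P: "matpoly n d A z \<in> Units (ring_mat TYPE(complex) n ())"
    by (rule invertible_mat_unit[OF matpoly_carrier Pinv])
  have L: "pencil n d A z \<in> Units (ring_mat TYPE(complex) (n * d) ())"
    by (rule pencil_unit[OF d0 P])
  define X where "X = minv (pencil n d A z) *\<^sub>v Y"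
  define Xt where "Xt = minv (ctrans (pencil n d A z)) *\<^sub>v W"
  note Lt = ctrans_carrier_mat[OF pencil_carrier] ctrans_unit[OF pencil_carrier L]
  have X: "X \<in> carrier_vec (n * d)" and Xt: "Xt \<in> carrier_vec (n * d)"
    unfolding X_def Xt_def using minv_inverse(1)[OF pencil_carrier L] minv_inverse(1)[OF Lt] Y W by auto
  have LX: "pencil n d A z *\<^sub>v X = Y"
    unfolding X_def by (rule mult_mat_vec_minv[OF pencil_carrier L Y])
  have LXt: "ctrans (pencil n d A z) *\<^sub>v Xt = W"
    unfolding Xt_def by (rule mult_mat_vec_minv[OF Lt W])
  note Pt = ctrans_carrier_mat[OF matpoly_carrier] ctrans_unit[OF matpoly_carrier P]
  have F: "finsum_vec TYPE(complex) n (\<lambda>j. cnj z ^ j \<cdot>\<^sub>v blk n W j) {0..<d} \<in> carrier_vec n"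
    by (rule finsum_vec_closed) auto
  show ?thesis
    using minv_mult_vec_eqI[OF matpoly_carrier P blk_carrier pencil_solution_first_block[OF d0 A_dim X LX]]
      minv_mult_vec_eqI[OF Pt blk_carrier adjoint_pencil_solution_last_block[OF d0 Xt LXt]]
      mult_mat_vec_uminus[OF minv_inverse(1)[OF Pt] F]
      pencil_solution_next_block[OF X LX]
      adjoint_pencil_solution_penultimate_block[OF _ A_dim Xt LXt]
      adjoint_pencil_solution_inner_block[OF _ A_dim Xt LXt]
    unfolding Let_def X_def[symmetric] Xt_def[symmetric] by auto
qed

end
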